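(* Let $G$ be a group and $\varphi\colon A\to B$ an isomorphism between subgroups of $G$. Let $Y$ be a group, $y\in Y$, and $\alpha\colon (G,\varphi)\to (Y,c_y)$ an embedding of HNN pairs. (1) If $Y$ is a finite group of $p$-power order ($p$ a prime), then the order of the restriction of $\varphi$ to $H(G,\varphi)$ is a power of $p$. (2) For $a\in A$ and $b\in B$, $\alpha$ is an embedding of HNN pairs $(G,c_b\circ\varphi\circ c_a)\to (Y,c_{\alpha(a)y\alpha(b)})$.
   Context: An HNN pair $(G,\varphi)$ is a group $G$ with an isomorphism $\varphi\colon A\to B$ between subgroups. For $g$ in a group, $c_g(x)=g^{-1}xg$; $(Y,c_y)$ is the HNN pair with $c_y\colon Y\to Y$. For $a\in A$, $b\in B$, $c_b\circ\varphi\circ c_a$ is an isomorphism $A\to B$. A morphism of HNN pairs $(G,\varphi\colon A\to B)\to(G',\varphi'\colon A'\to B')$ is a group homomorphism $\alpha\colon G\to G'$ with $\alpha(A)\subseteq A'$, $\alpha(B)\subseteq B'$ and $\varphi'\circ\alpha|_A=\alpha|_B\circ\varphi$; it is an embedding if $\alpha$ is injective. The core $H(G,\varphi)$ is $\bigcap_k H_k$ where $H_0=A\cap B$ and $H_{k+1}=\varphi^{-1}(H_k)\cap H_k\cap\varphi(H_k)$; $\varphi$ restricts to an automorphism of $H(G,\varphi)$. *)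

theory Defs
  imports "HOL-Algebra.Algebra" "HOL-Computational_Algebra.Primes"
begin

definition conj_by :: "('a, 'b) monoid_scheme \<Rightarrow> 'a \<Rightarrow> 'a \<Rightarrow> 'a" where
  "conj_by G g x = inv\<^bsub>G\<^esub> g \<otimes>\<^bsub>G\<^esub> x \<otimes>\<^bsub>G\<^esub> g"

definition hnn_pair :: "('a, 'b) monoid_scheme \<Rightarrow> 'a set \<Rightarrow> 'a set \<Rightarrow> ('a \<Rightarrow> 'a) \<Rightarrow> bool" where
  "hnn_pair G A B phi \<longleftrightarrow> group G \<and> subgroup A G \<and> subgroup B G \<and>
     phi \<in> iso (G\<lparr>carrier := A\<rparr>) (G\<lparr>carrier := B\<rparr>)"

definition hnn_morphism ::
  "('a, 'b) monoid_scheme \<Rightarrow> 'a set \<Rightarrow> 'a set \<Rightarrow> ('a \<Rightarrow> 'a) \<Rightarrow>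
   ('c, 'd) monoid_scheme \<Rightarrow> 'c set \<Rightarrow> 'c set \<Rightarrow> ('c \<Rightarrow> 'c) \<Rightarrow> ('a \<Rightarrow> 'c) \<Rightarrow> bool" where
  "hnn_morphism G A B phi H A2 B2 psi alpha \<longleftrightarrow>
     hnn_pair G A B phi \<and> hnn_pair H A2 B2 psi \<and>
     alpha \<in> hom G H \<and> alpha ` A \<subseteq> A2 \<and> alpha ` B \<subseteq> B2 \<and>
     (\<forall>x\<in>A. psi (alpha x) = alpha (phi x))"

definition hnn_embedding ::
  "('a, 'b) monoid_scheme \<Rightarrow> 'a set \<Rightarrow> 'a set \<Rightarrow> ('a \<Rightarrow> 'a) \<Rightarrow>
   ('c, 'd) monoid_scheme \<Rightarrow> 'c set \<Rightarrow> 'c set \<Rightarrow> ('c \<Rightarrow> 'c) \<Rightarrow> ('a \<Rightarrow> 'c) \<Rightarrow> bool" where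
  "hnn_embedding G A B phi H A2 B2 psi alpha \<longleftrightarrow>
     hnn_morphism G A B phi H A2 B2 psi alpha \<and> inj_on alpha (carrier G)"

primrec hnn_core_seq :: "'a set \<Rightarrow> 'a set \<Rightarrow> ('a \<Rightarrow> 'a) \<Rightarrow> nat \<Rightarrow> 'a set" where
  "hnn_core_seq A B phi 0 = A \<inter> B"
| "hnn_core_seq A B phi (Suc k) =
     {x \<in> A. phi x \<in> hnn_core_seq A B phi k} \<inter> hnn_core_seq A B phi k \<inter>
     phi ` hnn_core_seq A B phi k"

definition hnn_core :: "'a set \<Rightarrow> 'a set \<Rightarrow> ('a \<Rightarrow> 'a) \<Rightarrow> 'a set" where
  "hnn_core A B phi = (\<Inter>k. hnn_core_seq A B phi k)"

definition perm_order :: "'a set \<Rightarrow> ('a \<Rightarrow> 'a) \<Rightarrow> nat" where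
  "perm_order H f = (LEAST n. 0 < n \<and> (\<forall>x\<in>H. (f ^^ n) x = x))"

end

theory Submission
  imports Defs
begin

text \<open>
  (1) On the core the embedding intertwines \<open>\<phi>\<close> with conjugation by \<open>y\<close>; since
  \<open>y\<^bsup>|Y|\<^esup> = 1\<close>, injectivity forces \<open>\<phi>\<^bsup>|Y|\<^esup>\<close> to fix the core pointwise, so the order of
  \<open>\<phi>\<close> on the core divides the \<open>p\<close>-power \<open>|Y|\<close>.
  (2) Since \<open>\<alpha>\<close> is a homomorphism, \<open>\<alpha> \<circ> c\<^sub>b \<circ> \<phi> \<circ> c\<^sub>a = c\<^bsub>\<alpha>(b)\<^esub> \<circ> c\<^sub>y \<circ> c\<^bsub>\<alpha>(a)\<^esub> \<circ> \<alpha>\<close> on \<open>A\<close>,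
  and the composite of these three conjugations is conjugation by \<open>\<alpha>(a) y \<alpha>(b)\<close>.
\<close>

lemma (in group) conj_by_closed [simp]:
  "g \<in> carrier G \<Longrightarrow> x \<in> carrier G \<Longrightarrow> conj_by G g x \<in> carrier G"
  by (simp add: conj_by_def)

lemma (in group) conj_by_one [simp]:
  "x \<in> carrier G \<Longrightarrow> conj_by G \<one> x = x"
  by (simp add: conj_by_def)

lemma (in group) conj_by_mult:
  assumes "g \<in> carrier G" "h \<in> carrier G" "x \<in> carrier G"
  shows "conj_by G (g \<otimes> h) x = conj_by G h (conj_by G g x)"
  using assms by (simp add: conj_by_def inv_mult_group m_assoc)

lemma (in group) conj_by_funpow:
  assumes "y \<in> carrier G" "x \<in> carrier G"
  shows "(conj_by G y ^^ n) x = conj_by G (y [^] n) x"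
proof (induction n)
  case 0
  show ?case using assms by simp
next
  case (Suc n)
  then show ?case using assms by (simp add: nat_pow_Suc conj_by_mult)
qed

lemma (in group) conj_by_funpow_order:
  assumes "y \<in> carrier G" "x \<in> carrier G"
  shows "(conj_by G y ^^ order G) x = x"
  using assms by (simp add: conj_by_funpow pow_order_eq_1)

lemma (in group) conj_by_hom_distrib:
  assumes "g \<in> carrier G" "x \<in> carrier G" "z \<in> carrier G"
  shows "conj_by G g (x \<otimes> z) = conj_by G g x \<otimes> conj_by G g z"
proof -
  have "inv g \<otimes> (x \<otimes> z) \<otimes> g = inv g \<otimes> x \<otimes> (g \<otimes> inv g) \<otimes> z \<otimes> g"
    using assms by (simp add: m_assoc)
  also have "\<dots> = inv g \<otimes> x \<otimes> g \<otimes> (inv g \<otimes> z \<otimes> g)"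
    using assms by (simp only: m_assoc m_closed inv_closed)
  finally show ?thesis by (simp add: conj_by_def)
qed

lemma (in group) conj_by_inv_conj_by:
  assumes "g \<in> carrier G" "x \<in> carrier G"
  shows "conj_by G (inv g) (conj_by G g x) = x"
  using assms by (simp flip: conj_by_mult)

lemma (in group) subgroup_conj_by_closed:
  assumes "subgroup S G" "g \<in> S" "x \<in> S"
  shows "conj_by G g x \<in> S"
  using assms unfolding conj_by_def
  by (meson subgroup.m_closed subgroup.m_inv_closed)

lemma (in group) conj_by_iso_subgroup:
  assumes S: "subgroup S G" and g: "g \<in> S"
  shows "conj_by G g \<in> iso (G\<lparr>carrier := S\<rparr>) (G\<lparr>carrier := S\<rparr>)"
proof (rule isoI)
  have "S \<subseteq> carrier G" using S by (rule subgroup.subset)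
  then have gc: "g \<in> carrier G" and Sc: "\<And>x. x \<in> S \<Longrightarrow> x \<in> carrier G"
    using g by auto
  have ig: "inv g \<in> S" using S g by (rule subgroup.m_inv_closed)
  show "conj_by G g \<in> hom (G\<lparr>carrier := S\<rparr>) (G\<lparr>carrier := S\<rparr>)"
    using subgroup_conj_by_closed[OF S g] by (auto simp: hom_def conj_by_hom_distrib gc Sc)
  show "bij_betw (conj_by G g) (carrier (G\<lparr>carrier := S\<rparr>)) (carrier (G\<lparr>carrier := S\<rparr>))"
  proof (rule bij_betw_byWitness[where f' = "conj_by G (inv g)"], simp_all)
    show "\<forall>x\<in>S. conj_by G (inv g) (conj_by G g x) = x"
      using gc Sc by (simp add: conj_by_inv_conj_by)
    show "\<forall>x\<in>S. conj_by G g (conj_by G (inv g) x) = x"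
      using gc Sc conj_by_inv_conj_by[of "inv g"] by simp
    show "conj_by G g ` S \<subseteq> S" "conj_by G (inv g) ` S \<subseteq> S"
      using subgroup_conj_by_closed[OF S g] subgroup_conj_by_closed[OF S ig] by auto
  qed
qed

lemma hnn_pairD:
  assumes "hnn_pair G A B phi"
  shows "group G" "subgroup A G" "subgroup B G"
    "phi \<in> iso (G\<lparr>carrier := A\<rparr>) (G\<lparr>carrier := B\<rparr>)"
  using assms unfolding hnn_pair_def by simp_all

lemma hnn_morphismD:
  assumes "hnn_morphism G A B phi H A2 B2 psi alpha"
  shows "hnn_pair G A B phi" "hnn_pair H A2 B2 psi" "alpha \<in> hom G H"
    "alpha ` A \<subseteq> A2" "alpha ` B \<subseteq> B2" "\<And>x. x \<in> A \<Longrightarrow> psi (alpha x) = alpha (phi x)"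
  using assms unfolding hnn_morphism_def by simp_all

lemma hnn_embeddingD:
  assumes "hnn_embedding G A B phi H A2 B2 psi alpha"
  shows "hnn_morphism G A B phi H A2 B2 psi alpha" "inj_on alpha (carrier G)"
  using assms unfolding hnn_embedding_def by simp_all

lemma hnn_pair_conj_by:
  assumes "group Y" "y \<in> carrier Y"
  shows "hnn_pair Y (carrier Y) (carrier Y) (conj_by Y y)"
  using group.conj_by_iso_subgroup[OF assms(1) group.subgroup_self[OF assms(1)] assms(2)] assms(1)
  by (simp add: hnn_pair_def group.subgroup_self)

lemma hom_conj_by:
  assumes "group G" "group Y" "f \<in> hom G Y" "g \<in> carrier G" "x \<in> carrier G"
  shows "f (conj_by G g x) = conj_by Y (f g) (f x)"
proof -
  interpret group_hom G Y f using assms by (simp add: group_hom_def group_hom_axioms_def)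
  show ?thesis using assms by (simp add: conj_by_def)
qed

lemma hnn_core_subset: "hnn_core A B phi \<subseteq> A \<inter> B"
proof -
  have "hnn_core A B phi \<subseteq> hnn_core_seq A B phi 0"
    unfolding hnn_core_def by (rule INT_lower) simp
  then show ?thesis by simp
qed

lemma hnn_core_image:
  assumes "x \<in> hnn_core A B phi"
  shows "phi x \<in> hnn_core A B phi"
  unfolding hnn_core_def
proof
  fix k
  have "x \<in> hnn_core_seq A B phi (Suc k)" using assms unfolding hnn_core_def by blast
  then show "phi x \<in> hnn_core_seq A B phi k" by simp
qed

lemma hnn_core_funpow: "x \<in> hnn_core A B phi \<Longrightarrow> (phi ^^ n) x \<in> hnn_core A B phi"
  by (induction n) (simp_all add: hnn_core_image)

lemma hnn_morphism_funpow:
  assumes "hnn_morphism G A B phi H A2 B2 psi alpha" and x: "x \<in> hnn_core A B phi"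
  shows "alpha ((phi ^^ n) x) = (psi ^^ n) (alpha x)"
proof (induction n)
  case 0
  show ?case by simp
next
  case (Suc n)
  have "(phi ^^ n) x \<in> A \<inter> B"
    by (rule subsetD[OF hnn_core_subset hnn_core_funpow[OF x]])
  then have "alpha ((phi ^^ Suc n) x) = psi (alpha ((phi ^^ n) x))"
    by (simp add: hnn_morphismD(6)[OF assms(1)])
  also have "\<dots> = (psi ^^ Suc n) (alpha x)"
    by (simp only: Suc.IH funpow.simps comp_apply)
  finally show ?case .
qed

lemma hnn_embedding_funpow_id_on_core:
  assumes emb: "hnn_embedding G A B phi H A2 B2 psi alpha"
    and psi_id: "\<forall>z\<in>carrier H. (psi ^^ n) z = z"
    and x: "x \<in> hnn_core A B phi"
  shows "(phi ^^ n) x = x"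
proof -
  have mor: "hnn_morphism G A B phi H A2 B2 psi alpha"
    and inj: "inj_on alpha (carrier G)"
    using emb by (rule hnn_embeddingD)+
  have hom: "alpha \<in> hom G H" using mor by (rule hnn_morphismD)
  have "A \<subseteq> carrier G"
    using hnn_pairD(2)[OF hnn_morphismD(1)[OF mor]] by (rule subgroup.subset)
  moreover have "x \<in> A \<inter> B"
    by (rule subsetD[OF hnn_core_subset x])
  moreover have "(phi ^^ n) x \<in> A \<inter> B"
    by (rule subsetD[OF hnn_core_subset hnn_core_funpow[OF x]])
  ultimately have xc: "x \<in> carrier G" and phixc: "(phi ^^ n) x \<in> carrier G"
    by auto
  have "alpha ((phi ^^ n) x) = alpha x"
    using hnn_morphism_funpow[OF mor x] psi_id hom_in_carrier[OF hom xc] by simp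
  then show ?thesis using phixc xc by (rule inj_onD[OF inj])
qed

lemma perm_order_dvd:
  assumes "0 < m" "\<forall>x\<in>H. (f ^^ m) x = x"
  shows "perm_order H f dvd m"
proof -
  let ?period = "\<lambda>n. 0 < n \<and> (\<forall>x\<in>H. (f ^^ n) x = x)"
  define N where "N = perm_order H f"
  have "?period m" using assms by simp
  then have N: "?period N"
    unfolding N_def perm_order_def by (rule LeastI)
  have "\<forall>x\<in>H. (f ^^ (m mod N)) x = x"
    using N assms(2) by (simp add: funpow_mod_eq)
  moreover have "\<not> ?period (m mod N)"
    using N not_less_Least[of "m mod N" ?period] unfolding N_def perm_order_def by simp
  ultimately show ?thesis
    unfolding N_def by (simp add: mod_eq_0_iff_dvd)
qed

lemma hnn_embedding_conj_by_perm_order_dvd: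
  assumes "hnn_embedding G A B phi Y (carrier Y) (carrier Y) (conj_by Y y) alpha"
    and "group Y" "y \<in> carrier Y" "finite (carrier Y)"
  shows "perm_order (hnn_core A B phi) phi dvd order Y"
proof (rule perm_order_dvd)
  show "0 < order Y"
    using assms(2,4) by (simp add: group.is_monoid monoid.order_gt_0_iff_finite)
  show "\<forall>x\<in>hnn_core A B phi. (phi ^^ order Y) x = x"
  proof
    fix x assume "x \<in> hnn_core A B phi"
    then show "(phi ^^ order Y) x = x"
      by (rule hnn_embedding_funpow_id_on_core[OF assms(1), rotated])
        (simp add: group.conj_by_funpow_order[OF assms(2,3)])
  qed
qed

lemma hnn_pair_conj_by_twist:
  assumes "hnn_pair G A B phi" "a \<in> A" "b \<in> B"
  shows "hnn_pair G A B (\<lambda>x. conj_by G b (phi (conj_by G a x)))"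
proof -
  note G = hnn_pairD(1)[OF assms(1)] and A = hnn_pairD(2)[OF assms(1)]
    and B = hnn_pairD(3)[OF assms(1)] and phi = hnn_pairD(4)[OF assms(1)]
  have "conj_by G b \<circ> phi \<circ> conj_by G a \<in> iso (G\<lparr>carrier := A\<rparr>) (G\<lparr>carrier := B\<rparr>)"
    using iso_set_trans[OF iso_set_trans[OF group.conj_by_iso_subgroup[OF G A assms(2)] phi]
        group.conj_by_iso_subgroup[OF G B assms(3)]]
    by (simp add: comp_assoc)
  then show ?thesis using G A B by (simp add: hnn_pair_def comp_def)
qed

lemma hnn_embedding_conj_by_twist:
  assumes emb: "hnn_embedding G A B phi Y (carrier Y) (carrier Y) (conj_by Y y) alpha"
    and Y: "group Y" and y: "y \<in> carrier Y" and a: "a \<in> A" and b: "b \<in> B"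
  shows "hnn_embedding G A B (\<lambda>x. conj_by G b (phi (conj_by G a x)))
           Y (carrier Y) (carrier Y) (conj_by Y (alpha a \<otimes>\<^bsub>Y\<^esub> y \<otimes>\<^bsub>Y\<^esub> alpha b)) alpha"
proof -
  have mor: "hnn_morphism G A B phi Y (carrier Y) (carrier Y) (conj_by Y y) alpha"
    and inj: "inj_on alpha (carrier G)"
    using emb by (rule hnn_embeddingD)+
  note pair = hnn_morphismD(1)[OF mor] and hom = hnn_morphismD(3)[OF mor]
    and compat = hnn_morphismD(6)[OF mor]
  note G = hnn_pairD(1)[OF pair] and A = hnn_pairD(2)[OF pair] and B = hnn_pairD(3)[OF pair]
  have "bij_betw phi A B" using hnn_pairD(4)[OF pair] by (simp add: iso_def)
  then have phiB: "\<And>x. x \<in> A \<Longrightarrow> phi x \<in> B" using bij_betwE by blast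
  interpret G: group G by (fact G)
  interpret Y: group Y by (fact Y)
  have Ac: "\<And>x. x \<in> A \<Longrightarrow> x \<in> carrier G" and Bc: "\<And>x. x \<in> B \<Longrightarrow> x \<in> carrier G"
    using A B subgroup.subset by blast+
  have alpha_c: "\<And>x. x \<in> carrier G \<Longrightarrow> alpha x \<in> carrier Y"
    using hom by (rule hom_in_carrier)
  have twisted_compat:
    "conj_by Y (alpha a \<otimes>\<^bsub>Y\<^esub> y \<otimes>\<^bsub>Y\<^esub> alpha b) (alpha x) = alpha (conj_by G b (phi (conj_by G a x)))"
    if x: "x \<in> A" for x
  proof -
    have ax: "conj_by G a x \<in> A" using G.subgroup_conj_by_closed[OF A a x] .
    have "alpha (conj_by G b (phi (conj_by G a x)))
        = conj_by Y (alpha b) (alpha (phi (conj_by G a x)))"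
      using hom_conj_by[OF G Y hom] Bc[OF b] Bc[OF phiB[OF ax]] by simp
    also have "\<dots> = conj_by Y (alpha b) (conj_by Y y (conj_by Y (alpha a) (alpha x)))"
      using compat[OF ax] hom_conj_by[OF G Y hom] Ac[OF a] Ac[OF x] by simp
    also have "\<dots> = conj_by Y (alpha a \<otimes>\<^bsub>Y\<^esub> y \<otimes>\<^bsub>Y\<^esub> alpha b) (alpha x)"
      using alpha_c Ac[OF a] Bc[OF b] Ac[OF x] y by (simp add: Y.conj_by_mult)
    finally show ?thesis by simp
  qed
  have "alpha a \<otimes>\<^bsub>Y\<^esub> y \<otimes>\<^bsub>Y\<^esub> alpha b \<in> carrier Y"
    using alpha_c Ac[OF a] Bc[OF b] y by simp
  then show ?thesis
    unfolding hnn_embedding_def hnn_morphism_def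
    using hnn_pair_conj_by_twist[OF pair a b] hnn_pair_conj_by[OF Y] hom inj
      twisted_compat hom_carrier[OF hom] Ac Bc
    by (intro conjI ballI) auto
qed

theorem lemma3p1:
  fixes G :: "('a, 'b) monoid_scheme" and Y :: "('c, 'd) monoid_scheme"
    and A B :: "'a set" and phi :: "'a \<Rightarrow> 'a" and y :: 'c and alpha :: "'a \<Rightarrow> 'c"
  assumes "hnn_pair G A B phi"
    and "group Y" and "y \<in> carrier Y"
    and "hnn_embedding G A B phi Y (carrier Y) (carrier Y) (conj_by Y y) alpha"
  shows "(\<forall>(p::nat) n. Factorial_Ring.prime p \<and> finite (carrier Y) \<and> order Y = p ^ n \<longrightarrow>
            (\<exists>k. perm_order (hnn_core A B phi) phi = p ^ k))
       \<and> (\<forall>a\<in>A. \<forall>b\<in>B.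
            hnn_embedding G A B (\<lambda>x. conj_by G b (phi (conj_by G a x)))
              Y (carrier Y) (carrier Y)
              (conj_by Y (alpha a \<otimes>\<^bsub>Y\<^esub> y \<otimes>\<^bsub>Y\<^esub> alpha b)) alpha)"
proof (intro conjI allI impI ballI)
  fix p n :: nat
  assume p: "Factorial_Ring.prime p \<and> finite (carrier Y) \<and> order Y = p ^ n"
  then have "perm_order (hnn_core A B phi) phi dvd p ^ n"
    using hnn_embedding_conj_by_perm_order_dvd[OF assms(4,2,3)] by simp
  then show "\<exists>k. perm_order (hnn_core A B phi) phi = p ^ k"
    using p by (auto simp: divides_primepow_nat)
next
  fix a b assume "a \<in> A" "b \<in> B"
  then show "hnn_embedding G A B (\<lambda>x. conj_by G b (phi (conj_by G a x)))
      Y (carrier Y) (carrier Y) (conj_by Y (alpha a \<otimes>\<^bsub>Y\<^esub> y \<otimes>\<^bsub>Y\<^esub> alpha b)) alpha"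
    by (rule hnn_embedding_conj_by_twist[OF assms(4,2,3)])
qed

end
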